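(* In the setting described in the context (either all transition matrices symmetric, or all skew-symmetric), fix the codes $z_{j,i}$, all data systems and all dictionary atoms other than $D_r$. Then the sub-problem of minimizing $\Gamma_r$ over the atom $D_r=(A_r,C_r)$ subject to $C_r^{\mathrm T}C_r=I_n$ and $A_r$ strictly stable is equivalent to $$\min_{U_r^{(d)},\Lambda_r^{(d)}}\ \sum_{k=1}^n [U_r^{(d)}]_k^{*}\,S_{r,k}\,[U_r^{(d)}]_k\quad\text{s.t.}\quad (U_r^{(d)})^{*}U_r^{(d)}=I_n,\ \ |[\Lambda_r^{(d)}]_k|<1\ (1\le k\le n),$$ over canonical tuples $(\Lambda_r^{(d)},U_r^{(d)})$ of $D_r$; here the matrices $S_{r,k}$ do not depend on the measurement matrix $U_r^{(d)}$.
   Context: A system tuple $(A,C)$ has $A\in\mathbb{R}^{n\times n}$ strictly stable (eigenvalues of modulus $<1$) and $C\in\mathbb{R}^{m\times n}$ with $C^{\mathrm T}C=I_n$; tuples $(A,C)$ and $(P^{*}AP,CP)$, $P$ unitary, describe the same system. For symmetric or skew-symmetric $A$ a canonical tuple is $(\Lambda,U)$ with $\Lambda=P^{*}AP$ diagonal and $U=CP$, $U^{*}U=I_n$, for some unitary $P$. Extended observability matrix: $O=[C;CA;CA^2;\dots]$; with the SVD $O^{*}O=U_oS_oU_o^{*}$, $L=U_oS_o^{1/2}$ and $V=OL^{-\mathrm T}$ (orthonormal columns). Kernel between systems: $k(X_1,X_2)=\|V_1^{*}V_2\|_F^2$ (independent of the chosen representative). Data: systems $X_1,\dots,X_N$ with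 canonical tuples $(\Lambda_i^{(x)},U_i^{(x)})$; dictionary atoms $D_1,\dots,D_J$ with canonical tuples $(\Lambda_j^{(d)},U_j^{(d)})$; real codes $z_{j,i}$. Dictionary-learning objective $\sum_i\|\Pi(X_i)-\sum_j z_{j,i}\Pi(D_j)\|_F^2$ with $\Pi(V)=VV^{\mathrm T}$; the part depending on $D_r$ is (up to a factor 2 and constants) $\Gamma_r=\sum_{i=1}^N z_{r,i}\big(\sum_{j\ne r}z_{j,i}k(D_r,D_j)-k(D_r,X_i)\big)$. Notation: $[X]_k$ is the $k$-th column of $X$, or the $k$-th diagonal entry if $X$ is diagonal. For $\lambda\in\mathbb{C}$ and diagonal $\Lambda$ with entries $\lambda_1,\dots,\lambda_n$, $E(\lambda,\Lambda)=\mathrm{diag}\Big(\frac{(1-|\lambda|^2)(1-|\lambda_l|^2)}{|1-\lambda\lambda_l^{*}|^2}\Big)_{l=1}^n$. Set $F_{r,j,k}=U_j^{(d)}E([\Lambda_r^{(d)}]_k,\Lambda_j^{(d)})(U_j^{(d)})^{*}$, $F'_{r,i,k}=U_i^{(x)}E([\Lambda_r^{(d)}]_k,\Lambda_i^{(x)})(U_i^{(x)})^{*}$, and $S_{r,k}=\sum_{i=1}^N z_{r,i}\big(\sum_{j\ne r}z_{j,i}F_{r,j,k}-F'_{r,i,k}\big)$. *)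

theory Defs
  imports "HOL-Analysis.Analysis"
begin

section \<open>Matrix helpers (type-indexed dimensions: 'n = state dim n, 'm = output dim m)\<close>

fun mpow :: "('a::comm_ring_1)^'n^'n \<Rightarrow> nat \<Rightarrow> 'a^'n^'n" where
  "mpow A 0 = mat 1"
| "mpow A (Suc k) = A ** mpow A k"

definition cpx :: "real^'c^'r \<Rightarrow> complex^'c^'r" where
  "cpx M = (\<chi> i j. complex_of_real (M $ i $ j))"

definition adj :: "complex^'c^'r \<Rightarrow> complex^'r^'c" where
  "adj M = (\<chi> i j. cnj (M $ j $ i))"

definition cdiag :: "complex^'n \<Rightarrow> complex^'n^'n" where
  "cdiag v = (\<chi> i j. if i = j then v $ i else 0)"

definition unitary :: "complex^'n^'n \<Rightarrow> bool" where
  "unitary P \<longleftrightarrow> adj P ** P = mat 1"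

definition strictly_stable :: "real^'n^'n \<Rightarrow> bool" where
  "strictly_stable A \<longleftrightarrow>
     (\<forall>(\<mu>::complex) (v::complex^'n). v \<noteq> 0 \<and> cpx A *v v = \<mu> *s v \<longrightarrow> cmod \<mu> < 1)"

definition admissible :: "bool \<Rightarrow> real^'n^'n \<Rightarrow> real^'n^'m \<Rightarrow> bool" where
  "admissible sk A C \<longleftrightarrow>
     (if sk then transpose A = - A else transpose A = A) \<and> strictly_stable A
     \<and> transpose C ** C = mat 1"

text \<open>Block row t of O = [C; CA; CA^2; ...].\<close>
definition obs :: "real^'n^'n \<Rightarrow> real^'n^'m \<Rightarrow> nat \<Rightarrow> real^'n^'m" where
  "obs A C t = C ** mpow A t"

text \<open>O1^T O2 = sum_t (C1 A1^t)^T (C2 A2^t).\<close>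
definition gram :: "real^'n^'n \<Rightarrow> real^'n^'m \<Rightarrow> real^'n^'n \<Rightarrow> real^'n^'m \<Rightarrow> real^'n^'n" where
  "gram A1 C1 A2 C2 = (\<Sum>t. transpose (obs A1 C1 t) ** obs A2 C2 t)"

definition Lfac :: "real^'n^'n \<Rightarrow> real^'n^'m \<Rightarrow> real^'n^'n" where
  "Lfac A C = (SOME L. \<exists>Uo So. orthogonal_matrix Uo
       \<and> (\<forall>i j. i \<noteq> j \<longrightarrow> So $ i $ j = 0) \<and> (\<forall>i. So $ i $ i \<ge> 0)
       \<and> gram A C A C = Uo ** So ** transpose Uo
       \<and> L = Uo ** (\<chi> i j. sqrt (So $ i $ j)))"

text \<open>Block row t of V = O L^(-T).\<close>
definition Vblk :: "real^'n^'n \<Rightarrow> real^'n^'m \<Rightarrow> nat \<Rightarrow> real^'n^'m" where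
  "Vblk A C t = obs A C t ** transpose (matrix_inv (Lfac A C))"

definition frob2 :: "real^'c^'r \<Rightarrow> real" where
  "frob2 M = (\<Sum>i\<in>UNIV. \<Sum>j\<in>UNIV. (M $ i $ j)^2)"

definition kernel :: "((real^'n^'n) \<times> (real^'n^'m)) \<Rightarrow> ((real^'n^'n) \<times> (real^'n^'m)) \<Rightarrow> real" where
  "kernel X1 X2 = frob2 (\<Sum>t. transpose (Vblk (fst X1) (snd X1) t) ** Vblk (fst X2) (snd X2) t)"

definition Gamma ::
  "(nat \<Rightarrow> nat \<Rightarrow> real) \<Rightarrow> (nat \<Rightarrow> (real^'n^'n) \<times> (real^'n^'m)) \<Rightarrow> (nat \<Rightarrow> (real^'n^'n) \<times> (real^'n^'m))
    \<Rightarrow> nat \<Rightarrow> nat \<Rightarrow> nat \<Rightarrow> real" where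
  "Gamma z X D N J r = (\<Sum>i<N. z r i *
      ((\<Sum>j\<in>{..<J} - {r}. z j i * kernel (D r) (D j)) - kernel (D r) (X i)))"

definition canonical :: "real^'n^'n \<Rightarrow> real^'n^'m \<Rightarrow> complex^'n \<Rightarrow> complex^'n^'m \<Rightarrow> bool" where
  "canonical A C lam U \<longleftrightarrow>
     (\<exists>P. unitary P \<and> adj P ** cpx A ** P = cdiag lam \<and> U = cpx C ** P)"

definition Emat :: "complex \<Rightarrow> complex^'n \<Rightarrow> complex^'n^'n" where
  "Emat la lam = cdiag (\<chi> l. complex_of_real
      ((1 - (cmod la)^2) * (1 - (cmod (lam $ l))^2) / (cmod (1 - la * cnj (lam $ l)))^2))"

definition Fmat :: "complex^'n^'m \<Rightarrow> complex \<Rightarrow> complex^'n \<Rightarrow> complex^'m^'m" where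
  "Fmat U la lam = U ** Emat la lam ** adj U"

text \<open>S_{r,k}; lamr is Lambda_r^(d); it does not involve U_r^(d).\<close>
definition Smat ::
  "(nat \<Rightarrow> nat \<Rightarrow> real) \<Rightarrow> (nat \<Rightarrow> complex^'n) \<Rightarrow> (nat \<Rightarrow> complex^'n^'m)
    \<Rightarrow> (nat \<Rightarrow> complex^'n) \<Rightarrow> (nat \<Rightarrow> complex^'n^'m)
    \<Rightarrow> nat \<Rightarrow> nat \<Rightarrow> nat \<Rightarrow> complex^'n \<Rightarrow> 'n \<Rightarrow> complex^'m^'m" where
  "Smat z lamX UX lamD UD N J r lamr k = (\<Sum>i<N. z r i *\<^sub>R
      ((\<Sum>j\<in>{..<J} - {r}. z j i *\<^sub>R Fmat (UD j) (lamr $ k) (lamD j))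
        - Fmat (UX i) (lamr $ k) (lamX i)))"

definition quad :: "complex^'m \<Rightarrow> complex^'m^'m \<Rightarrow> complex" where
  "quad u S = (\<Sum>l\<in>UNIV. cnj (u $ l) * ((S *v u) $ l))"

end

theory Submission
  imports Defs
begin

(*
  Diagonalise an admissible system as A = P Lambda P^*, C = U P^* with P unitary: a symmetric A is
  Hermitian, and a skew-symmetric A becomes Hermitian after multiplication by i. Summing geometric
  series then gives O1^T O2 = P1 K P2^* with K_kl = (U1^* U2)_kl / (1 - conj(lambda1_k) lambda2_l);
  in particular O^T O = P diag(1 / (1 - |lambda_k|^2)) P^*. Since L L^T = O^T O, the whitened
  matrices satisfy V1^T V2 = L1^-1 O1^T O2 L2^-T, and the trace of its Gram matrix only sees the
  inverse Gramians, so
    k(X1, X2) = sum_{k,l} (1 - |lambda1_k|^2)(1 - |lambda2_l|^2) |(U1^* U2)_kl|^2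
                          / |1 - conj(lambda1_k) lambda2_l|^2,
  which is sum_k [U1]_k^* F [U1]_k. As Gamma_r is a linear combination of kernel values, exchanging
  the sums turns it into the quadratic form in the columns of U_r^(d) with the matrices S_{r,k},
  which involve Lambda_r^(d) but not U_r^(d).
*)

section \<open>Scalars with a conjugation\<close>

text \<open>The spectral theorem is proved once for real and complex scalars: the complex case
  diagonalises the transition matrices, the real case the Gramian whose factorisation defines
  \<open>Lfac\<close>.\<close>
class rclike = real_normed_field + euclidean_space +
  fixes rc_cnj :: "'a \<Rightarrow> 'a"
  assumes rc_cnj_rc_cnj[simp]: "rc_cnj (rc_cnj x) = x"
    and rc_cnj_add: "rc_cnj (x + y) = rc_cnj x + rc_cnj y"
    and rc_cnj_mult: "rc_cnj (x * y) = rc_cnj x * rc_cnj y"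
    and rc_cnj_scaleR_one: "rc_cnj (r *\<^sub>R 1) = r *\<^sub>R 1"
    and inner_eq_inner_one_rc_cnj: "inner x y = inner 1 (rc_cnj x * y)"
    and rc_cnj_mult_self: "rc_cnj x * x = (norm x)\<^sup>2 *\<^sub>R 1"

instantiation real :: rclike begin
definition rc_cnj_real :: "real \<Rightarrow> real" where "rc_cnj_real x = x"
instance by standard (simp_all add: rc_cnj_real_def power2_eq_square)
end

instantiation complex :: rclike begin
definition rc_cnj_complex :: "complex \<Rightarrow> complex" where "rc_cnj_complex = cnj"
instance
proof
  fix x y :: complex and r :: real
  show "rc_cnj x * x = (cmod x)\<^sup>2 *\<^sub>R 1"
    by (simp add: rc_cnj_complex_def scaleR_conv_of_real mult.commute[of "cnj x"]
        complex_mult_cnj cmod_power2 del: of_real_power)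
qed (simp_all add: rc_cnj_complex_def inner_complex_def)
end

lemma rc_cnj_of_real[simp]: "rc_cnj (of_real r :: 'a::rclike) = of_real r"
  using rc_cnj_scaleR_one[of r] by (simp add: scaleR_conv_of_real)

lemma rc_cnj_mult_self_of_real: "rc_cnj x * x = (of_real ((norm x)\<^sup>2) :: 'a::rclike)"
  using rc_cnj_mult_self[of x] by (simp add: scaleR_conv_of_real)

lemma cnj_mult_self: "cnj z * z = complex_of_real ((cmod z)\<^sup>2)"
  using rc_cnj_mult_self_of_real[of z] by (simp add: rc_cnj_complex_def)

lemma rc_cnj_zero[simp]: "rc_cnj 0 = (0::'a::rclike)"
  using rc_cnj_add[of "0::'a" 0] by simp

lemma rc_cnj_one[simp]: "rc_cnj 1 = (1::'a::rclike)"
  using rc_cnj_of_real[of 1, where 'a='a] by simp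

lemma rc_cnj_sum: "rc_cnj (sum f A) = (\<Sum>x\<in>A. rc_cnj (f x))" for f :: "'b \<Rightarrow> 'a::rclike"
  by (induction A rule: infinite_finite_induct) (auto simp: rc_cnj_add)

definition rc_re :: "'a::rclike \<Rightarrow> real" where
  "rc_re x = inner 1 x"

lemma rc_re_add: "rc_re (x + y) = rc_re x + rc_re y"
  by (simp add: rc_re_def inner_add_right)

lemma rc_re_diff: "rc_re (x - y) = rc_re x - rc_re y"
  by (simp add: rc_re_def inner_diff_right)

lemma rc_re_sum: "rc_re (sum f A) = (\<Sum>x\<in>A. rc_re (f x))"
  by (simp add: rc_re_def inner_sum_right)

lemma rc_re_of_real_mult: "rc_re (of_real r * x) = r * rc_re (x::'a::rclike)"
  by (simp add: rc_re_def scaleR_conv_of_real[symmetric])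

lemma rc_re_of_real[simp]: "rc_re (of_real r :: 'a::rclike) = r"
  using rc_re_of_real_mult[of r "1::'a"] by (simp add: rc_re_def dot_square_norm)

lemma rc_re_rc_cnj[simp]: "rc_re (rc_cnj x) = rc_re (x::'a::rclike)"
  using inner_eq_inner_one_rc_cnj[of x 1] by (simp add: rc_re_def inner_commute)

lemma rc_re_rc_cnj_mult: "rc_re (rc_cnj x * y) = inner x (y::'a::rclike)"
  unfolding rc_re_def by (rule inner_eq_inner_one_rc_cnj[symmetric])

definition mat_adj :: "'a::rclike^'c^'r \<Rightarrow> 'a^'r^'c" where
  "mat_adj M = (\<chi> i j. rc_cnj (M $ j $ i))"

definition cinner :: "'a::rclike^'n \<Rightarrow> 'a^'n \<Rightarrow> 'a" where
  "cinner u v = (\<Sum>i\<in>UNIV. rc_cnj (u $ i) * v $ i)"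

lemma cinner_zero_right[simp]: "cinner u 0 = 0"
  by (simp add: cinner_def)

lemma cinner_add_left: "cinner (u + v) w = cinner u w + cinner v w"
  by (simp add: cinner_def rc_cnj_add distrib_right sum.distrib)

lemma cinner_add_right: "cinner u (v + w) = cinner u v + cinner u w"
  by (simp add: cinner_def distrib_left sum.distrib)

lemma cinner_diff_right: "cinner u (v - w) = cinner u v - cinner u w"
  by (simp add: cinner_def right_diff_distrib sum_subtractf)

lemma cinner_scale_left: "cinner (c *s u) v = rc_cnj c * cinner u v"
  by (simp add: cinner_def sum_distrib_left rc_cnj_mult mult.assoc)

lemma cinner_scale_right: "cinner u (c *s v) = c * cinner u v"
  by (simp add: cinner_def sum_distrib_left mult.left_commute)

lemma cinner_sum_right: "cinner u (sum f A) = (\<Sum>a\<in>A. cinner u (f a))"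
  by (induction A rule: infinite_finite_induct) (simp_all add: cinner_add_right)

lemma cinner_commute: "cinner v u = rc_cnj (cinner u v)"
  by (simp add: cinner_def rc_cnj_sum rc_cnj_mult mult.commute)

lemma cinner_self: "cinner w w = (of_real ((norm w)\<^sup>2) :: 'a::rclike)"
proof -
  have "cinner w w = of_real (\<Sum>i\<in>UNIV. (norm (w $ i))\<^sup>2)"
    by (simp add: cinner_def rc_cnj_mult_self_of_real)
  also have "(\<Sum>i\<in>UNIV. (norm (w $ i))\<^sup>2) = (norm w)\<^sup>2"
    by (simp add: norm_vec_def L2_set_def sum_nonneg)
  finally show ?thesis .
qed

lemma rc_re_cinner_self: "rc_re (cinner w w) = (norm w)\<^sup>2"
  by (simp only: cinner_self rc_re_of_real)

lemma rc_re_cinner: "rc_re (cinner u v) = (\<Sum>i\<in>UNIV. inner (u $ i) (v $ i))"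
  by (simp add: cinner_def rc_re_sum rc_re_rc_cnj_mult)

lemma cinner_mat_adj: "cinner u (H *v v) = cinner (mat_adj H *v u) v"
proof -
  have "cinner u (H *v v) = (\<Sum>i\<in>UNIV. \<Sum>j\<in>UNIV. rc_cnj (u$i) * (H$i$j * v$j))"
    by (simp add: cinner_def matrix_vector_mult_def sum_distrib_left)
  also have "\<dots> = (\<Sum>j\<in>UNIV. \<Sum>i\<in>UNIV. rc_cnj (u$i) * (H$i$j * v$j))"
    by (rule sum.swap)
  also have "\<dots> = cinner (mat_adj H *v u) v"
    by (simp add: cinner_def mat_adj_def matrix_vector_mult_def rc_cnj_sum rc_cnj_mult
        sum_distrib_left sum_distrib_right mult_ac)
  finally show ?thesis .
qed

lemma mat_adj_mat_one[simp]: "mat_adj (mat 1 :: 'a::rclike^'n^'n) = mat 1"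
  by (simp add: mat_adj_def mat_def vec_eq_iff)

lemma scaleR_eq_of_real_scale: "r *\<^sub>R w = (of_real r :: 'a::rclike) *s w"
  unfolding vec_eq_iff vector_scaleR_component vector_smult_component
  by (simp add: scaleR_conv_of_real)

lemma matrix_vector_mult_scale: "H *v (c *s w) = c *s (H *v w)" for H :: "'a::comm_ring_1^'n^'m"
  by (simp add: vec_eq_iff matrix_vector_mult_def sum_distrib_left mult_ac)

definition qform :: "'a::rclike^'n^'n \<Rightarrow> 'a^'n \<Rightarrow> real" where
  "qform H w = rc_re (cinner w (H *v w))"

lemma qform_mat_one: "qform (mat 1) w = (norm w)\<^sup>2"
  by (simp add: qform_def rc_re_cinner_self)

lemma qform_scale: "qform H (of_real r *s w) = r\<^sup>2 * qform H w"
  by (simp add: qform_def matrix_vector_mult_scale cinner_scale_left cinner_scale_right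
      mult.assoc[symmetric] rc_re_of_real_mult[of "r * r", simplified] power2_eq_square)

lemma qform_add_scale:
  assumes herm: "mat_adj H = H"
  shows "qform H (x + of_real t *s z)
       = qform H x + 2 * t * rc_re (cinner z (H *v x)) + t\<^sup>2 * qform H z"
proof -
  have swap: "rc_re (cinner x (H *v z)) = rc_re (cinner z (H *v x))"
    using cinner_mat_adj[of x H z] herm by (simp add: cinner_commute[of "H *v x"])
  have expand: "cinner (x + of_real t *s z) (H *v (x + of_real t *s z))
      = cinner x (H *v x) + of_real t * cinner x (H *v z) + of_real t * cinner z (H *v x)
        + of_real (t * t) * cinner z (H *v z)"
    by (simp add: matrix_vector_right_distrib matrix_vector_mult_scale cinner_add_left
        cinner_add_right cinner_scale_left cinner_scale_right algebra_simps)
  have "qform H (x + of_real t *s z) = qform H x + t * rc_re (cinner z (H *v x))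
      + t * rc_re (cinner z (H *v x)) + (t * t) * qform H z"
    unfolding qform_def expand rc_re_add rc_re_of_real_mult swap ..
  then show ?thesis
    by (simp add: power2_eq_square)
qed

section \<open>Spectral theorem for Hermitian matrices\<close>

definition diag_mat :: "'a::zero^'n \<Rightarrow> 'a^'n^'n" where
  "diag_mat v = (\<chi> i j. if i = j then v $ i else 0)"

lemma linear_coeff_zero_if_quadratic_nonpos:
  fixes a b :: real
  assumes "\<And>t. a * t + b * t\<^sup>2 \<le> 0"
  shows "a = 0"
proof (rule ccontr)
  assume a: "a \<noteq> 0"
  define t where "t = \<bar>a\<bar> / (\<bar>b\<bar> + 1)"
  have t_pos: "t > 0"
    using a by (simp add: t_def add_pos_nonneg)
  have "(\<bar>b\<bar> + 1) * t = \<bar>a\<bar>"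
    by (simp add: t_def)
  then have t_eq: "\<bar>b\<bar> * t + t = \<bar>a\<bar>"
    by (simp add: algebra_simps)
  have "a * t + b * t\<^sup>2 \<le> 0" "a * (-t) + b * (-t)\<^sup>2 \<le> 0"
    using assms by blast+
  then have "\<bar>a\<bar> * t \<le> - b * t\<^sup>2"
    by (cases "a \<ge> 0") auto
  also have "\<dots> \<le> \<bar>b\<bar> * t\<^sup>2"
    by (intro mult_right_mono) auto
  finally have "\<bar>a\<bar> * t \<le> \<bar>b\<bar> * t * t"
    by (simp add: power2_eq_square mult.assoc)
  then have "\<bar>a\<bar> \<le> \<bar>b\<bar> * t"
    using t_pos by simp
  with t_pos t_eq show False by linarith
qed

lemma exists_orthogonal_to_orthonormal:
  fixes f :: "'n::finite \<Rightarrow> 'a::rclike^'n"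
  assumes card: "card I < CARD('n)"
    and orthonormal: "\<And>a b. a \<in> I \<Longrightarrow> b \<in> I \<Longrightarrow> cinner (f a) (f b) = (if a = b then 1 else 0)"
  obtains w where "w \<noteq> 0" "\<And>a. a \<in> I \<Longrightarrow> cinner (f a) w = 0"
proof -
  have "vec.span (f ` I) \<noteq> UNIV"
  proof
    assume "vec.span (f ` I) = UNIV"
    then have "vec.dim (UNIV::('a^'n) set) \<le> card (f ` I)"
      by (intro vec.dim_le_card) auto
    also have "\<dots> \<le> card I"
      by (rule card_image_le) simp
    finally show False
      using card vec_dim_card[where 'a='a and 'n='n] by linarith
  qed
  then obtain v where v: "v \<notin> vec.span (f ` I)"
    by blast
  define p where "p = (\<Sum>a\<in>I. cinner (f a) v *s f a)"
  have "p \<in> vec.span (f ` I)"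
    unfolding p_def by (intro vec.span_sum vec.span_scale vec.span_base) auto
  then have "v - p \<noteq> 0"
    using v by auto
  moreover have "cinner (f b) (v - p) = 0" if b: "b \<in> I" for b
  proof -
    have "cinner (f b) p = (\<Sum>a\<in>I. if b = a then cinner (f a) v else 0)"
      unfolding p_def cinner_sum_right cinner_scale_right
      using orthonormal b by (intro sum.cong) auto
    then show ?thesis
      using b by (simp add: cinner_diff_right)
  qed
  ultimately show ?thesis
    using that by blast
qed

lemma qform_attains_max_on_subspace:
  fixes H :: "'a::rclike^'n^'n"
  assumes "closed W" and W_scale: "\<And>v c. v \<in> W \<Longrightarrow> c *s v \<in> W"
    and w0: "w0 \<in> W" "w0 \<noteq> 0"
  obtains x where "x \<in> W" "norm x = 1" "\<And>y. y \<in> W \<Longrightarrow> qform H y \<le> qform H x * (norm y)\<^sup>2"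
proof -
  define S where "S = W \<inter> sphere 0 1"
  have normalize: "of_real (inverse (norm y)) *s y \<in> S" if "y \<in> W" "y \<noteq> 0" for y
  proof -
    have "norm (of_real (inverse (norm y)) *s y) = 1"
      using that unfolding scaleR_eq_of_real_scale[symmetric] by simp
    with W_scale that show ?thesis
      by (simp add: S_def)
  qed
  have "compact S"
    unfolding S_def using \<open>closed W\<close> by (rule closed_Int_compact[OF _ compact_sphere])
  moreover have "S \<noteq> {}"
    using normalize[OF w0] by blast
  moreover have "continuous_on S (qform H)"
    unfolding qform_def rc_re_cinner matrix_vector_mult_def by (intro continuous_intros)
  ultimately obtain x where x: "x \<in> S" and max: "\<And>y. y \<in> S \<Longrightarrow> qform H y \<le> qform H x"
    using continuous_attains_sup by metis
  have "qform H y \<le> qform H x * (norm y)\<^sup>2" if "y \<in> W" for y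
  proof (cases "y = 0")
    case True
    then show ?thesis
      by (simp add: qform_def rc_re_def)
  next
    case False
    have "(inverse (norm y))\<^sup>2 * qform H y \<le> qform H x"
      using max[OF normalize[OF that False]] unfolding qform_scale .
    with False show ?thesis
      by (simp add: field_simps power2_eq_square)
  qed
  with x that show ?thesis
    by (auto simp: S_def)
qed

text \<open>First-order optimality of the Rayleigh quotient: the residual of a maximiser is
  orthogonal to the subspace, so it vanishes once it lies in it.\<close>
lemma qform_max_is_eigenvector:
  fixes H :: "'a::rclike^'n^'n"
  assumes herm: "mat_adj H = H"
    and W_lin: "\<And>u v c. u \<in> W \<Longrightarrow> v \<in> W \<Longrightarrow> u + c *s v \<in> W"
    and x: "x \<in> W" "norm x = 1"
    and max: "\<And>y. y \<in> W \<Longrightarrow> qform H y \<le> qform H x * (norm y)\<^sup>2"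
    and residual_in: "H *v x - of_real (qform H x) *s x \<in> W"
  shows "H *v x = of_real (qform H x) *s x"
proof -
  define l where "l = qform H x"
  define v where "v = H *v x - of_real l *s x"
  have "rc_re (cinner z v) = 0" if z: "z \<in> W" for z
  proof -
    have "2 * rc_re (cinner z v) * t + (qform H z - l * (norm z)\<^sup>2) * t\<^sup>2 \<le> 0" for t
    proof -
      let ?y = "x + of_real t *s z"
      have "qform H ?y \<le> l * (norm ?y)\<^sup>2"
        using max W_lin[OF x(1) z] by (simp add: l_def)
      moreover have "qform H ?y = l + 2 * t * rc_re (cinner z (H *v x)) + t\<^sup>2 * qform H z"
        using qform_add_scale[OF herm, of x t z] by (simp add: l_def)
      moreover have "(norm ?y)\<^sup>2 = 1 + 2 * t * rc_re (cinner z x) + t\<^sup>2 * (norm z)\<^sup>2"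
        using qform_add_scale[of "mat 1" x t z] x(2) by (simp add: qform_mat_one)
      moreover have "rc_re (cinner z (H *v x)) = rc_re (cinner z v) + l * rc_re (cinner z x)"
        by (simp add: v_def cinner_diff_right cinner_scale_right rc_re_diff rc_re_of_real_mult)
      ultimately show ?thesis
        by (simp add: algebra_simps)
    qed
    then show ?thesis
      using linear_coeff_zero_if_quadratic_nonpos by fastforce
  qed
  from this[of v] have "v = 0"
    using residual_in by (simp add: v_def l_def rc_re_cinner_self)
  then show ?thesis
    by (simp add: v_def l_def)
qed

lemma hermitian_eigenvector_orthogonal:
  fixes H :: "'a::rclike^'n^'n" and f :: "'n \<Rightarrow> 'a^'n"
  assumes herm: "mat_adj H = H" and card: "card I < CARD('n)"
    and orthonormal: "\<And>a b. a \<in> I \<Longrightarrow> b \<in> I \<Longrightarrow> cinner (f a) (f b) = (if a = b then 1 else 0)"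
    and eigen: "\<And>a. a \<in> I \<Longrightarrow> H *v f a = \<mu> a *s f a"
  obtains x l where "cinner x x = 1" "\<And>a. a \<in> I \<Longrightarrow> cinner (f a) x = 0"
    "H *v x = of_real l *s x"
proof -
  define W where "W = {w. \<forall>a\<in>I. cinner (f a) w = 0}"
  have W_lin: "u + c *s v \<in> W" if "u \<in> W" "v \<in> W" for u v c
    using that by (simp add: W_def cinner_add_right cinner_scale_right)
  have "continuous_on UNIV (cinner u)" for u :: "'a^'n"
    unfolding cinner_def by (intro continuous_intros)
  then have "closed {w. cinner (f a) w = 0}" for a
    by (rule closed_Collect_eq[OF _ continuous_on_const])
  then have "closed W"
    unfolding W_def Collect_ball_eq by (intro closed_INT) auto
  moreover have "c *s v \<in> W" if "v \<in> W" for v c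
    using that by (simp add: W_def cinner_scale_right)
  moreover obtain w0 where "w0 \<noteq> 0" "\<And>a. a \<in> I \<Longrightarrow> cinner (f a) w0 = 0"
    using exists_orthogonal_to_orthonormal[OF card orthonormal] by metis
  then have "w0 \<in> W" "w0 \<noteq> 0"
    by (simp_all add: W_def)
  ultimately obtain x where x: "x \<in> W" "norm x = 1"
    and max: "\<And>y. y \<in> W \<Longrightarrow> qform H y \<le> qform H x * (norm y)\<^sup>2"
    using qform_attains_max_on_subspace by blast
  have "cinner (f a) (H *v x) = 0" if a: "a \<in> I" for a
  proof -
    have "cinner (f a) (H *v x) = rc_cnj (\<mu> a) * cinner (f a) x"
      using cinner_mat_adj[of "f a" H x] by (simp only: herm eigen[OF a] cinner_scale_left)
    with x(1) a show ?thesis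
      by (simp add: W_def)
  qed
  then have "H *v x - of_real (qform H x) *s x \<in> W"
    using x(1) by (simp add: W_def cinner_diff_right cinner_scale_right)
  then have "H *v x = of_real (qform H x) *s x"
    using qform_max_is_eigenvector[OF herm W_lin x max] by blast
  moreover have "cinner x x = 1"
    using x(2) by (simp add: cinner_self)
  ultimately show ?thesis
    using that x(1) unfolding W_def by blast
qed

lemma hermitian_orthonormal_eigenvectors:
  fixes H :: "'a::rclike^'n^'n" and I :: "'n set"
  assumes herm: "mat_adj H = H"
  shows "\<exists>f \<mu>. (\<forall>a\<in>I. \<forall>b\<in>I. cinner (f a) (f b) = (if a = b then 1 else 0))
               \<and> (\<forall>a\<in>I. H *v f a = \<mu> a *s f a)"
proof (induction I rule: finite_induct[OF finite])
  case 1
  then show ?case by simp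
next
  case (2 i F)
  then obtain f \<mu> where orthonormal: "\<forall>a\<in>F. \<forall>b\<in>F. cinner (f a) (f b) = (if a = b then 1 else 0)"
    and eigen: "\<forall>a\<in>F. H *v f a = \<mu> a *s f a"
    by blast
  have "card (insert i F) \<le> CARD('n)"
    by (rule card_mono) auto
  then have "card F < CARD('n)"
    using 2 by simp
  then obtain x l where x: "cinner x x = 1" "\<And>a. a \<in> F \<Longrightarrow> cinner (f a) x = 0"
    "H *v x = of_real l *s x"
    using hermitian_eigenvector_orthogonal[OF herm, of F f \<mu>] orthonormal eigen by metis
  have "\<And>a. a \<in> F \<Longrightarrow> cinner x (f a) = 0"
    using x(2) by (simp add: cinner_commute[of x])
  with 2 orthonormal eigen x show ?case
    by (intro exI[of _ "f(i := x)"] exI[of _ "\<mu>(i := of_real l)"]) auto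
qed

theorem hermitian_unitarily_diagonalizable:
  fixes H :: "'a::rclike^'n^'n"
  assumes herm: "mat_adj H = H"
  obtains P :: "'a^'n^'n" and d where "mat_adj P ** P = mat 1" "mat_adj P ** H ** P = diag_mat d"
proof -
  obtain f :: "'n \<Rightarrow> 'a^'n" and \<mu>
    where orthonormal: "\<And>a b. cinner (f a) (f b) = (if a = b then 1 else 0)"
      and eigen: "\<And>a. H *v f a = \<mu> a *s f a"
    using hermitian_orthonormal_eigenvectors[OF herm, of UNIV] by blast
  define P where "P = (\<chi> r c. f c $ r)"
  have "(mat_adj P ** P) $ a $ b = cinner (f a) (f b)" for a b
    by (simp add: matrix_matrix_mult_def mat_adj_def P_def cinner_def)
  then have unitary: "mat_adj P ** P = mat 1"
    using orthonormal by (simp add: vec_eq_iff mat_def)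
  have HP: "H ** P = (\<chi> r c. \<mu> c * f c $ r)"
  proof -
    have "(H ** P) $ r $ c = (H *v f c) $ r" for r c
      by (simp add: matrix_matrix_mult_def matrix_vector_mult_def P_def)
    then show ?thesis
      using eigen by (simp add: vec_eq_iff)
  qed
  have "(mat_adj P ** (H ** P)) $ a $ b = \<mu> b * cinner (f a) (f b)" for a b
    unfolding HP by (simp add: matrix_matrix_mult_def mat_adj_def P_def cinner_def
        sum_distrib_left mult_ac)
  then have "mat_adj P ** H ** P = diag_mat (\<chi> i. \<mu> i)"
    using orthonormal by (simp add: vec_eq_iff diag_mat_def matrix_mul_assoc[symmetric])
  with unitary show ?thesis
    by (rule that)
qed

lemma adj_eq_mat_adj: "adj M = mat_adj M"
  by (simp add: adj_def mat_adj_def rc_cnj_complex_def)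

lemma mat_adj_real: "mat_adj (M::real^'c^'r) = transpose M"
  by (simp add: mat_adj_def transpose_def rc_cnj_real_def)

lemma cpx_mult: "cpx (A ** B) = cpx A ** cpx B"
  by (simp add: cpx_def matrix_matrix_mult_def vec_eq_iff)

lemma cpx_transpose: "cpx (transpose M) = adj (cpx M)"
  by (simp add: cpx_def adj_def transpose_def vec_eq_iff)

lemma cpx_mat_one[simp]: "cpx (mat 1) = mat 1"
  by (simp add: cpx_def mat_def vec_eq_iff)

lemma cpx_inject: "cpx X = cpx Y \<longleftrightarrow> X = Y"
  by (simp add: cpx_def vec_eq_iff)

lemma cpx_mpow: "cpx (mpow A t) = mpow (cpx A) t"
  by (induction t) (simp_all add: cpx_mult)

lemma adj_mult: "adj (A ** B) = adj B ** adj A"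
  by (simp add: adj_def matrix_matrix_mult_def vec_eq_iff mult.commute)

lemma adj_adj[simp]: "adj (adj A) = A"
  by (simp add: adj_def vec_eq_iff)

lemma unitary_mult_adj: "unitary P \<Longrightarrow> P ** adj P = mat 1"
  unfolding unitary_def using matrix_left_right_inverse by blast

lemma cdiag_eq_diag_mat: "cdiag = diag_mat"
  by (simp add: fun_eq_iff cdiag_def diag_mat_def)

lemma diag_mat_mult_entry: "(diag_mat a ** B) $ i $ j = a $ i * B $ i $ j"
  for B :: "'a::comm_semiring_1^'m^'n"
proof -
  have "(diag_mat a ** B) $ i $ j = (\<Sum>k\<in>UNIV. if k = i then a $ i * B $ i $ j else 0)"
    unfolding diag_mat_def matrix_matrix_mult_def vec_lambda_beta by (intro sum.cong) auto
  then show ?thesis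
    by simp
qed

lemma mult_diag_mat_entry: "(B ** diag_mat b) $ i $ j = B $ i $ j * b $ j"
  for B :: "'a::comm_semiring_1^'n^'m"
proof -
  have "(B ** diag_mat b) $ i $ j = (\<Sum>k\<in>UNIV. if k = j then B $ i $ j * b $ j else 0)"
    unfolding diag_mat_def matrix_matrix_mult_def vec_lambda_beta by (intro sum.cong) auto
  then show ?thesis
    by simp
qed

lemma diag_mat_mult: "diag_mat a ** diag_mat b = diag_mat (\<chi> i. a $ i * b $ i)"
  for a :: "'a::comm_semiring_1^'n"
  by (simp add: vec_eq_iff diag_mat_mult_entry) (simp add: diag_mat_def)

lemma diag_mat_one: "diag_mat (\<chi> i. 1) = (mat 1 :: 'a::comm_semiring_1^'n^'n)"
  by (simp add: diag_mat_def mat_def vec_eq_iff)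

lemma transpose_diag_mat: "transpose (diag_mat v) = diag_mat v"
  by (simp add: diag_mat_def transpose_def vec_eq_iff)

lemma adj_cdiag: "adj (cdiag v) = cdiag (\<chi> i. cnj (v $ i))"
  by (simp add: adj_def cdiag_def vec_eq_iff)

lemma mpow_diag_mat: "mpow (diag_mat v) t = diag_mat (\<chi> i. v $ i ^ t)"
  by (induction t) (simp_all add: diag_mat_one diag_mat_mult)

lemma diag_mat_vector_mult_axis: "diag_mat v *v axis k 1 = v $ k *s axis k (1::'a::comm_semiring_1)"
proof -
  have "(diag_mat v *v axis k 1) $ i = (\<Sum>j\<in>UNIV. if j = i then (if i = k then v $ k else 0) else 0)"
    for i
    unfolding diag_mat_def matrix_vector_mult_def axis_def vec_lambda_beta by (intro sum.cong) auto
  then show ?thesis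
    by (simp add: vec_eq_iff axis_def)
qed

lemma mpow_unitary_conj:
  assumes "unitary P"
  shows "mpow (P ** D ** adj P) t = P ** mpow D t ** adj P"
proof (induction t)
  case 0
  then show ?case
    using unitary_mult_adj[OF assms] by simp
next
  case (Suc t)
  have "mpow (P ** D ** adj P) (Suc t) = (P ** D ** adj P) ** (P ** mpow D t ** adj P)"
    using Suc by simp
  also have "\<dots> = P ** D ** (adj P ** P) ** mpow D t ** adj P"
    by (simp add: matrix_mul_assoc)
  also have "\<dots> = P ** mpow D (Suc t) ** adj P"
    using assms unfolding unitary_def by (simp add: matrix_mul_assoc)
  finally show ?case .
qed

lemma canonical_factorization:
  assumes "canonical A C lam U"
  obtains P where "unitary P" "cpx A = P ** cdiag lam ** adj P" "cpx C = U ** adj P"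
proof -
  obtain P where P: "unitary P" "adj P ** cpx A ** P = cdiag lam" "U = cpx C ** P"
    using assms unfolding canonical_def by blast
  have PP: "P ** adj P = mat 1"
    using unitary_mult_adj[OF P(1)] .
  have "cpx A = (P ** adj P) ** cpx A ** (P ** adj P)"
    using PP by simp
  also have "\<dots> = P ** (adj P ** cpx A ** P) ** adj P"
    by (simp add: matrix_mul_assoc)
  finally have "cpx A = P ** cdiag lam ** adj P"
    using P(2) by simp
  moreover have "cpx C = cpx C ** (P ** adj P)"
    using PP by simp
  then have "cpx C = U ** adj P"
    using P(3) by (simp add: matrix_mul_assoc)
  ultimately show ?thesis
    using that P(1) by blast
qed

lemma canonical_measurement_unitary:
  assumes "transpose C ** C = mat 1" "canonical A C lam U"
  shows "adj U ** U = mat 1"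
proof -
  obtain P where P: "unitary P" "U = cpx C ** P"
    using assms(2) unfolding canonical_def by blast
  have "adj (cpx C) ** cpx C = mat 1"
    using assms(1) by (metis cpx_transpose cpx_mult cpx_mat_one)
  then have "adj U ** U = adj P ** P"
    by (simp add: P(2) adj_mult matrix_mul_assoc[symmetric]) (simp add: matrix_mul_assoc)
  with P(1) show ?thesis
    by (simp add: unitary_def)
qed

lemma canonical_eigenvalue_in_disc:
  assumes "strictly_stable A" "canonical A C lam U"
  shows "cmod (lam $ k) < 1"
proof -
  obtain P where P: "unitary P" "cpx A = P ** cdiag lam ** adj P"
    using canonical_factorization[OF assms(2)] by metis
  define v where "v = P *v axis k 1"
  have AP: "cpx A ** P = P ** cdiag lam"
    using P unfolding unitary_def by (simp add: matrix_mul_assoc[symmetric])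
  have "cpx A *v v = (cpx A ** P) *v axis k 1"
    by (simp add: v_def matrix_vector_mul_assoc)
  also have "\<dots> = P *v (cdiag lam *v axis k 1)"
    by (simp add: AP matrix_vector_mul_assoc)
  also have "\<dots> = lam $ k *s v"
    by (simp add: cdiag_eq_diag_mat diag_mat_vector_mult_axis matrix_vector_mult_scale v_def)
  finally have "cpx A *v v = lam $ k *s v" .
  moreover have "adj P *v v = axis k 1"
    using P(1) unfolding unitary_def by (simp add: v_def matrix_vector_mul_assoc)
  then have "v \<noteq> 0"
    by auto
  ultimately show ?thesis
    using assms(1) unfolding strictly_stable_def by blast
qed

lemma scaled_matrix_sandwich:
  "X ** (\<chi> i j. c * M $ i $ j) ** Y = (\<chi> i j. c * (X ** M ** Y) $ i $ j)"
  for X M Y :: "complex^'n^'n"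
  by (simp add: vec_eq_iff matrix_matrix_mult_def sum_distrib_left sum_distrib_right mult_ac)

lemma canonical_if_hermitian_multiple:
  fixes A :: "real^'n^'n" and C :: "real^'n^'m" and c :: complex
  defines "H \<equiv> \<chi> i j. c * cpx A $ i $ j"
  assumes "c \<noteq> 0" and "mat_adj H = H"
  shows "\<exists>lam U. canonical A C lam U"
proof -
  obtain P :: "complex^'n^'n" and d where P: "mat_adj P ** P = mat 1" "mat_adj P ** H ** P = diag_mat d"
    by (rule hermitian_unitarily_diagonalizable[OF assms(3)])
  have "(\<chi> i j. c * (adj P ** cpx A ** P) $ i $ j) = diag_mat d"
    using P(2) by (simp add: H_def scaled_matrix_sandwich adj_eq_mat_adj)
  then have entry: "c * (adj P ** cpx A ** P) $ i $ j = diag_mat d $ i $ j" for i j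
    by (simp add: vec_eq_iff)
  have "(adj P ** cpx A ** P) $ i $ j = cdiag (\<chi> i. d $ i / c) $ i $ j" for i j
    using entry[of i j] \<open>c \<noteq> 0\<close> by (cases "i = j") (auto simp: cdiag_def diag_mat_def field_simps)
  then have "adj P ** cpx A ** P = cdiag (\<chi> i. d $ i / c)"
    by (simp add: vec_eq_iff)
  moreover have "unitary P"
    using P(1) by (simp add: unitary_def adj_eq_mat_adj)
  ultimately show ?thesis
    unfolding canonical_def by blast
qed

lemma admissible_has_canonical:
  fixes A :: "real^'n^'n" and C :: "real^'n^'m"
  assumes "admissible sk A C"
  shows "\<exists>lam U. canonical A C lam U"
proof -
  have adj_scaled: "mat_adj (\<chi> i j. c * cpx A $ i $ j)
      = (\<chi> i j. cnj c * complex_of_real (transpose A $ i $ j))" for c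
    by (simp add: mat_adj_def rc_cnj_complex_def cpx_def transpose_def vec_eq_iff)
  show ?thesis
  proof (cases sk)
    case False
    then have "transpose A = A"
      using assms by (simp add: admissible_def)
    then have "mat_adj (\<chi> i j. 1 * cpx A $ i $ j) = (\<chi> i j. 1 * cpx A $ i $ j)"
      unfolding adj_scaled by (simp add: cpx_def)
    then show ?thesis
      by (rule canonical_if_hermitian_multiple[OF one_neq_zero])
  next
    case True
    then have "transpose A = - A"
      using assms by (simp add: admissible_def)
    then have "mat_adj (\<chi> i j. \<i> * cpx A $ i $ j) = (\<chi> i j. \<i> * cpx A $ i $ j)"
      unfolding adj_scaled by (simp add: cpx_def)
    then show ?thesis
      by (rule canonical_if_hermitian_multiple[OF complex_i_not_zero])
  qed
qed

section \<open>Observability series\<close>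

definition stable_diagonalization ::
  "real^'n^'n \<Rightarrow> real^'n^'m \<Rightarrow> complex^'n^'n \<Rightarrow> complex^'n \<Rightarrow> complex^'n^'m \<Rightarrow> bool" where
  "stable_diagonalization A C P lam U \<longleftrightarrow>
     unitary P \<and> cpx A = P ** cdiag lam ** adj P \<and> cpx C = U ** adj P
     \<and> (\<forall>k. cmod (lam $ k) < 1) \<and> adj U ** U = mat 1"

lemma admissible_canonical_stable_diagonalization:
  assumes "admissible sk A C" "canonical A C lam U"
  obtains P where "stable_diagonalization A C P lam U"
proof -
  have "strictly_stable A" "transpose C ** C = mat 1"
    using assms(1) by (simp_all add: admissible_def)
  with assms(2) show ?thesis
    using that canonical_factorization[OF assms(2)] canonical_eigenvalue_in_disc
      canonical_measurement_unitary
    unfolding stable_diagonalization_def by metis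
qed

lemma sums_vec:
  assumes "\<And>i. (\<lambda>n. f n $ i) sums (s $ i)"
  shows "f sums s"
  using assms unfolding sums_def by (intro vec_tendstoI) (simp add: sum_component)

lemma sums_mat:
  assumes "\<And>i j. (\<lambda>n. f n $ i $ j) sums (s $ i $ j)"
  shows "f sums s"
  by (rule sums_vec, rule sums_vec) (use assms in simp)

lemma matrix_mult3_entry:
  "(X ** M ** Y) $ i $ j = (\<Sum>k\<in>UNIV. \<Sum>l\<in>UNIV. X $ i $ k * (M $ k $ l * Y $ l $ j))"
  for X :: "'a::comm_semiring_1^'k^'i"
proof -
  have "(X ** M ** Y) $ i $ j = (\<Sum>l\<in>UNIV. \<Sum>k\<in>UNIV. X $ i $ k * (M $ k $ l * Y $ l $ j))"
    by (simp add: matrix_matrix_mult_def sum_distrib_right mult.assoc)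
  also have "\<dots> = (\<Sum>k\<in>UNIV. \<Sum>l\<in>UNIV. X $ i $ k * (M $ k $ l * Y $ l $ j))"
    by (rule sum.swap)
  finally show ?thesis .
qed

lemma sums_matrix_sandwich:
  fixes f :: "nat \<Rightarrow> 'a::real_normed_field^'l^'k"
  assumes "f sums S"
  shows "(\<lambda>t. X ** f t ** Y) sums (X ** S ** Y)"
proof (rule sums_mat)
  fix i j
  have "(\<lambda>t. f t $ k $ l) sums (S $ k $ l)" for k l
    using sums_vec_nth[OF sums_vec_nth[OF assms]] by simp
  then show "(\<lambda>n. (X ** f n ** Y) $ i $ j) sums ((X ** S ** Y) $ i $ j)"
    unfolding matrix_mult3_entry by (intro sums_sum sums_mult sums_mult2)
qed

lemma cpx_obs:
  assumes "stable_diagonalization A C P lam U"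
  shows "cpx (obs A C t) = U ** cdiag (\<chi> i. lam $ i ^ t) ** adj P"
proof -
  have P: "unitary P" "cpx A = P ** cdiag lam ** adj P" "cpx C = U ** adj P"
    using assms by (simp_all add: stable_diagonalization_def)
  have "cpx (obs A C t) = U ** adj P ** (P ** cdiag (\<chi> i. lam $ i ^ t) ** adj P)"
    by (simp add: obs_def cpx_mult cpx_mpow P(2,3) mpow_unitary_conj[OF P(1)]
        cdiag_eq_diag_mat mpow_diag_mat)
  also have "\<dots> = U ** (adj P ** P) ** cdiag (\<chi> i. lam $ i ^ t) ** adj P"
    by (simp add: matrix_mul_assoc)
  finally show ?thesis
    using P(1) by (simp add: unitary_def)
qed

definition cross_mat :: "complex^'n \<Rightarrow> complex^'n^'m \<Rightarrow> complex^'n \<Rightarrow> complex^'n^'m \<Rightarrow> complex^'n^'n" where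
  "cross_mat l1 U1 l2 U2 = (\<chi> k l. (adj U1 ** U2) $ k $ l / (1 - cnj (l1 $ k) * l2 $ l))"

lemma cpx_obs_cross_term:
  assumes "stable_diagonalization A1 C1 P1 l1 U1" "stable_diagonalization A2 C2 P2 l2 U2"
  shows "cpx (transpose (obs A1 C1 t) ** obs A2 C2 t)
       = P1 ** (\<chi> k l. (cnj (l1 $ k) * l2 $ l) ^ t * (adj U1 ** U2) $ k $ l) ** adj P2"
proof -
  have "cpx (transpose (obs A1 C1 t) ** obs A2 C2 t)
      = P1 ** (cdiag (\<chi> i. cnj (l1 $ i) ^ t) ** (adj U1 ** U2) ** cdiag (\<chi> i. l2 $ i ^ t)) ** adj P2"
    by (simp add: cpx_mult cpx_transpose cpx_obs[OF assms(1)] cpx_obs[OF assms(2)] adj_mult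
        adj_cdiag matrix_mul_assoc)
  also have "cdiag (\<chi> i. cnj (l1 $ i) ^ t) ** (adj U1 ** U2) ** cdiag (\<chi> i. l2 $ i ^ t)
      = (\<chi> k l. (cnj (l1 $ k) * l2 $ l) ^ t * (adj U1 ** U2) $ k $ l)"
    by (simp add: vec_eq_iff cdiag_eq_diag_mat diag_mat_mult_entry mult_diag_mat_entry
        power_mult_distrib mult_ac)
  finally show ?thesis .
qed

lemma obs_cross_sums:
  assumes d1: "stable_diagonalization A1 C1 P1 l1 U1"
    and d2: "stable_diagonalization A2 C2 P2 l2 U2"
  shows "(\<lambda>t. transpose (obs A1 C1 t) ** obs A2 C2 t) sums gram A1 C1 A2 C2"
    and "cpx (gram A1 C1 A2 C2) = P1 ** cross_mat l1 U1 l2 U2 ** adj P2"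
proof -
  define K where "K = cross_mat l1 U1 l2 U2"
  define Q where "Q t = (\<chi> k l. (cnj (l1 $ k) * l2 $ l) ^ t * (adj U1 ** U2) $ k $ l)" for t
  have "Q sums K"
  proof (rule sums_mat)
    fix k l
    have "cmod (l1 $ k) * cmod (l2 $ l) < 1 * 1"
      using d1 d2 by (intro mult_strict_mono') (auto simp: stable_diagonalization_def)
    then have "norm (cnj (l1 $ k) * l2 $ l) < 1"
      by (simp add: norm_mult)
    then have "(\<lambda>t. (cnj (l1 $ k) * l2 $ l) ^ t * (adj U1 ** U2) $ k $ l)
        sums (1 / (1 - cnj (l1 $ k) * l2 $ l) * (adj U1 ** U2) $ k $ l)"
      by (intro sums_mult2 geometric_sums)
    then show "(\<lambda>t. Q t $ k $ l) sums (K $ k $ l)"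
      by (simp add: Q_def K_def cross_mat_def)
  qed
  then have cpx_sums: "(\<lambda>t. cpx (transpose (obs A1 C1 t) ** obs A2 C2 t)) sums (P1 ** K ** adj P2)"
    unfolding cpx_obs_cross_term[OF d1 d2] Q_def[symmetric] by (rule sums_matrix_sandwich)
  have entry: "(\<lambda>t. complex_of_real ((transpose (obs A1 C1 t) ** obs A2 C2 t) $ i $ j))
      sums ((P1 ** K ** adj P2) $ i $ j)" for i j
    using sums_vec_nth[OF sums_vec_nth[OF cpx_sums]] by (simp add: cpx_def)
  define G where "G = (\<chi> i j. Re ((P1 ** K ** adj P2) $ i $ j))"
  have sums_G: "(\<lambda>t. transpose (obs A1 C1 t) ** obs A2 C2 t) sums G"
    by (rule sums_mat) (use sums_Re[OF entry] in \<open>simp add: G_def\<close>)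
  then show "(\<lambda>t. transpose (obs A1 C1 t) ** obs A2 C2 t) sums gram A1 C1 A2 C2"
    by (simp add: gram_def sums_iff)
  have "Im ((P1 ** K ** adj P2) $ i $ j) = 0" for i j
    using sums_Im[OF entry[of i j]] sums_unique[OF sums_zero] by (simp add: sums_iff)
  then have "cpx G = P1 ** K ** adj P2"
    by (simp add: cpx_def vec_eq_iff G_def complex_eq_iff)
  with sums_G show "cpx (gram A1 C1 A2 C2) = P1 ** cross_mat l1 U1 l2 U2 ** adj P2"
    by (simp add: gram_def sums_iff K_def)
qed

definition gram_spectrum :: "complex^'n \<Rightarrow> complex^'n" where
  "gram_spectrum l = (\<chi> k. complex_of_real (1 / (1 - (cmod (l $ k))\<^sup>2)))"

definition inv_gram_spectrum :: "complex^'n \<Rightarrow> complex^'n" where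
  "inv_gram_spectrum l = (\<chi> k. complex_of_real (1 - (cmod (l $ k))\<^sup>2))"

lemma cpx_gram_self:
  assumes d: "stable_diagonalization A C P l U"
  shows "cpx (gram A C A C) = P ** cdiag (gram_spectrum l) ** adj P"
proof -
  have "adj U ** U = mat 1"
    using d by (simp add: stable_diagonalization_def)
  then have "cross_mat l U l U = cdiag (gram_spectrum l)"
    by (simp add: cross_mat_def cdiag_def gram_spectrum_def vec_eq_iff mat_def cnj_mult_self)
  with obs_cross_sums(2)[OF d d] show ?thesis
    by simp
qed

lemma transpose_gram_self:
  assumes "stable_diagonalization A C P l U"
  shows "transpose (gram A C A C) = gram A C A C"
proof -
  have "adj (cdiag (gram_spectrum l)) = cdiag (gram_spectrum l)"
    by (simp add: adj_cdiag gram_spectrum_def vec_eq_iff)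
  then have "cpx (transpose (gram A C A C)) = cpx (gram A C A C)"
    by (simp add: cpx_transpose cpx_gram_self[OF assms] adj_mult matrix_mul_assoc)
  then show ?thesis
    by (simp add: cpx_inject)
qed

lemma gram_spectrum_ge_one:
  assumes "cmod z < 1"
  shows "1 / (1 - (cmod z)\<^sup>2) \<ge> 1"
proof -
  have "(cmod z)\<^sup>2 < 1"
    using assms by (simp add: abs_square_less_1)
  then show ?thesis
    by (simp add: field_simps)
qed

text \<open>In the eigenbasis of the Gramian a unit vector sees the weights
  \<open>1 / (1 - |\<lambda>|\<^sup>2) \<ge> 1\<close>.\<close>
lemma orthogonal_congruence_gram_diag_ge_one:
  assumes d: "stable_diagonalization A C P l U" and Q: "transpose Q ** Q = mat 1"
  shows "(transpose Q ** gram A C A C ** Q) $ i $ i \<ge> 1"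
proof -
  define W where "W = adj P ** cpx Q"
  have P: "unitary P" "\<And>k. cmod (l $ k) < 1"
    using d by (simp_all add: stable_diagonalization_def)
  have "cpx (transpose Q ** gram A C A C ** Q) = adj W ** cdiag (gram_spectrum l) ** W"
    by (simp add: cpx_mult cpx_transpose cpx_gram_self[OF d] W_def adj_mult matrix_mul_assoc)
  then have "complex_of_real ((transpose Q ** gram A C A C ** Q) $ i $ i)
      = (\<Sum>k\<in>UNIV. cnj (W $ k $ i) * (gram_spectrum l $ k * W $ k $ i))"
    by (simp add: cpx_def vec_eq_iff cdiag_eq_diag_mat matrix_mult3_entry diag_mat_def adj_def
        if_distrib if_distribR sum.If_cases)
  also have "\<dots> = complex_of_real (\<Sum>k\<in>UNIV. 1 / (1 - (cmod (l $ k))\<^sup>2) * (cmod (W $ k $ i))\<^sup>2)"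
    by (simp add: gram_spectrum_def mult.left_commute[of "cnj _"] cnj_mult_self)
  finally have diag: "(transpose Q ** gram A C A C ** Q) $ i $ i
      = (\<Sum>k\<in>UNIV. 1 / (1 - (cmod (l $ k))\<^sup>2) * (cmod (W $ k $ i))\<^sup>2)"
    by (simp only: of_real_eq_iff)
  have "adj W ** W = adj (cpx Q) ** (P ** adj P) ** cpx Q"
    by (simp add: W_def adj_mult matrix_mul_assoc)
  also have "\<dots> = mat 1"
    using unitary_mult_adj[OF P(1)] by (simp flip: cpx_transpose cpx_mult add: Q)
  finally have "(adj W ** W) $ i $ i = 1"
    by (simp add: mat_def)
  then have "complex_of_real (\<Sum>k\<in>UNIV. (cmod (W $ k $ i))\<^sup>2) = 1"
    by (simp add: adj_def matrix_matrix_mult_def cnj_mult_self)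
  then have "(\<Sum>k\<in>UNIV. (cmod (W $ k $ i))\<^sup>2) = 1"
    by (simp only: of_real_eq_1_iff)
  moreover have "(\<Sum>k\<in>UNIV. (cmod (W $ k $ i))\<^sup>2)
      \<le> (\<Sum>k\<in>UNIV. 1 / (1 - (cmod (l $ k))\<^sup>2) * (cmod (W $ k $ i))\<^sup>2)"
    using mult_right_mono[OF gram_spectrum_ge_one[OF P(2)] zero_le_power2]
    by (intro sum_mono) simp
  ultimately show ?thesis
    using diag by simp
qed

lemma Lfac_spec:
  fixes A :: "real^'n^'n" and C :: "real^'n^'m"
  assumes d: "stable_diagonalization A C P l U"
  obtains Uo :: "real^'n^'n" and s where "orthogonal_matrix Uo" "\<And>i. s $ i \<ge> 1"
    "gram A C A C = Uo ** diag_mat s ** transpose Uo"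
    "Lfac A C = Uo ** diag_mat (\<chi> i. sqrt (s $ i))"
proof -
  define G where "G = gram A C A C"
  have "mat_adj G = G"
    using transpose_gram_self[OF d] by (simp add: G_def mat_adj_real)
  then obtain Uo :: "real^'n^'n" and d where Uo: "mat_adj Uo ** Uo = mat 1"
    and diag: "mat_adj Uo ** G ** Uo = diag_mat d"
    by (rule hermitian_unitarily_diagonalizable)
  have "orthogonal_matrix Uo"
    using Uo by (simp add: mat_adj_real orthogonal_matrix_def matrix_left_right_inverse)
  have "Uo ** diag_mat d ** transpose Uo = (Uo ** transpose Uo) ** G ** (Uo ** transpose Uo)"
    unfolding diag[symmetric] mat_adj_real by (simp add: matrix_mul_assoc)
  then have "G = Uo ** diag_mat d ** transpose Uo"
    using \<open>orthogonal_matrix Uo\<close> by (simp add: orthogonal_matrix_def)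
  moreover have "d $ i \<ge> 0" for i
    using orthogonal_congruence_gram_diag_ge_one[OF d, of Uo i] Uo diag
    by (simp add: G_def mat_adj_real diag_mat_def)
  ultimately have "\<exists>L Uo So. orthogonal_matrix Uo
       \<and> (\<forall>i j. i \<noteq> j \<longrightarrow> So $ i $ j = 0) \<and> (\<forall>i. So $ i $ i \<ge> 0)
       \<and> gram A C A C = Uo ** So ** transpose Uo
       \<and> L = Uo ** (\<chi> i j. sqrt (So $ i $ j))"
    using \<open>orthogonal_matrix Uo\<close>
    by (intro exI[of _ "Uo ** (\<chi> i j. sqrt (diag_mat d $ i $ j))"] exI[of _ Uo] exI[of _ "diag_mat d"])
      (auto simp: G_def diag_mat_def)
  from someI_ex[OF this] obtain Uo' So where Uo': "orthogonal_matrix Uo'"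
    and off_diag: "\<forall>i j. i \<noteq> j \<longrightarrow> So $ i $ j = 0"
    and G_eq: "G = Uo' ** So ** transpose Uo'"
    and L_eq: "Lfac A C = Uo' ** (\<chi> i j. sqrt (So $ i $ j))"
    unfolding Lfac_def[symmetric] G_def by blast
  define s where "s = (\<chi> i. So $ i $ i)"
  have So: "So = diag_mat s"
    using off_diag by (auto simp: s_def diag_mat_def vec_eq_iff)
  have "transpose Uo' ** G ** Uo' = So"
    using Uo' unfolding G_eq orthogonal_matrix_def
    by (simp add: matrix_mul_assoc) (simp add: matrix_mul_assoc[symmetric])
  then have "s $ i \<ge> 1" for i
    using orthogonal_congruence_gram_diag_ge_one[OF d, of Uo' i] Uo'
    by (simp add: G_def s_def orthogonal_matrix_def)
  moreover have "gram A C A C = Uo' ** diag_mat s ** transpose Uo'"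
    using G_eq by (simp add: G_def So)
  moreover have "(\<chi> i j. sqrt (So $ i $ j)) = diag_mat (\<chi> i. sqrt (s $ i))"
    by (simp add: So diag_mat_def vec_eq_iff)
  then have "Lfac A C = Uo' ** diag_mat (\<chi> i. sqrt (s $ i))"
    using L_eq by simp
  ultimately show ?thesis
    using that Uo' by blast
qed

lemma Lfac_mult_transpose:
  fixes A :: "real^'n^'n" and C :: "real^'n^'m"
  assumes "stable_diagonalization A C P l U"
  shows "Lfac A C ** transpose (Lfac A C) = gram A C A C"
proof -
  obtain Uo :: "real^'n^'n" and s where "\<And>i. s $ i \<ge> 1"
    and G: "gram A C A C = Uo ** diag_mat s ** transpose Uo"
    and L: "Lfac A C = Uo ** diag_mat (\<chi> i. sqrt (s $ i))"
    using Lfac_spec[OF assms] by metis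
  have "\<bar>s $ i\<bar> = s $ i" for i
    using \<open>\<And>i. s $ i \<ge> 1\<close>[of i] by simp
  then have sqrt_sq: "diag_mat (\<chi> i. sqrt (s $ i)) ** transpose (diag_mat (\<chi> i. sqrt (s $ i)))
      = diag_mat s"
    by (simp add: transpose_diag_mat diag_mat_mult vec_eq_iff)
  have "Lfac A C ** transpose (Lfac A C)
      = Uo ** (diag_mat (\<chi> i. sqrt (s $ i)) ** transpose (diag_mat (\<chi> i. sqrt (s $ i))))
        ** transpose Uo"
    by (simp add: L matrix_transpose_mul matrix_mul_assoc)
  then show ?thesis
    by (simp add: sqrt_sq G)
qed

lemma Lfac_invertible:
  fixes A :: "real^'n^'n" and C :: "real^'n^'m"
  assumes "stable_diagonalization A C P l U"
  shows "invertible (Lfac A C)"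
proof -
  obtain Uo :: "real^'n^'n" and s where Uo: "orthogonal_matrix Uo" and s: "\<And>i. s $ i \<ge> 1"
    and L: "Lfac A C = Uo ** diag_mat (\<chi> i. sqrt (s $ i))"
    using Lfac_spec[OF assms] by metis
  have "s $ i \<noteq> 0" for i
    using s[of i] by simp
  then have "diag_mat (\<chi> i. sqrt (s $ i)) ** diag_mat (\<chi> i. 1 / sqrt (s $ i)) = mat 1"
    by (simp add: diag_mat_mult diag_mat_one[symmetric])
  then have "Lfac A C ** (diag_mat (\<chi> i. 1 / sqrt (s $ i)) ** transpose Uo) = mat 1"
    using Uo unfolding L orthogonal_matrix_def by (simp add: matrix_mul_assoc[symmetric])
      (simp add: matrix_mul_assoc)
  then show ?thesis
    using invertible_right_inverse by blast
qed

lemma invertible_matrix_inv: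
  assumes "invertible (L::'a::semiring_1^'n^'n)"
  shows "L ** matrix_inv L = mat 1" "matrix_inv L ** L = mat 1"
proof -
  from assms obtain L' where "L ** L' = mat 1 \<and> L' ** L = mat 1"
    by (auto simp: invertible_def)
  then have "L ** matrix_inv L = mat 1 \<and> matrix_inv L ** L = mat 1"
    unfolding matrix_inv_def by (rule someI)
  then show "L ** matrix_inv L = mat 1" "matrix_inv L ** L = mat 1"
    by auto
qed

lemma gram_spectrum_mult_inv:
  assumes "\<And>k. cmod (l $ k) < 1"
  shows "cdiag (gram_spectrum l) ** cdiag (inv_gram_spectrum l) = mat 1"
proof -
  have "(cmod (l $ k))\<^sup>2 < 1" for k
    using assms[of k] by (simp add: abs_square_less_1)
  then have "complex_of_real ((cmod (l $ k))\<^sup>2) \<noteq> 1" for k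
    by (metis less_irrefl of_real_eq_1_iff)
  then show ?thesis
    by (simp add: cdiag_eq_diag_mat diag_mat_mult diag_mat_one[symmetric] gram_spectrum_def
        inv_gram_spectrum_def flip: of_real_mult)
qed

text \<open>Since \<open>L\<^sup>-\<^sup>T L\<^sup>-\<^sup>1\<close> is the inverse Gramian, \<open>L\<^sup>-\<^sup>1\<close> maps its eigenvectors
  \<open>p\<^sub>k\<close> to orthogonal vectors of squared length \<open>1 - |\<lambda>\<^sub>k|\<^sup>2\<close>.\<close>
lemma Lfac_inverse_whitening:
  fixes A :: "real^'n^'n" and C :: "real^'n^'m"
  assumes d: "stable_diagonalization A C P l U"
  defines "N \<equiv> cpx (matrix_inv (Lfac A C)) ** P"
  shows "adj N ** N = cdiag (inv_gram_spectrum l)"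
proof -
  define L where "L = Lfac A C"
  define Li where "Li = matrix_inv L"
  define G where "G = gram A C A C"
  have inv: "L ** Li = mat 1" "Li ** L = mat 1"
    using invertible_matrix_inv[OF Lfac_invertible[OF d]] by (simp_all add: L_def Li_def)
  have "G = L ** transpose L"
    using Lfac_mult_transpose[OF d] by (simp add: L_def G_def)
  then have "transpose Li ** Li ** G = transpose Li ** (Li ** L) ** transpose L"
    by (simp add: matrix_mul_assoc)
  also have "\<dots> = transpose (L ** Li)"
    by (simp add: inv(2) matrix_transpose_mul)
  also have "\<dots> = mat 1"
    by (simp add: inv(1) transpose_mat)
  finally have ZG: "adj (cpx Li) ** cpx Li ** cpx G = mat 1"
    by (simp add: inv flip: cpx_transpose cpx_mult)
  have P: "adj P ** P = mat 1"
    using d by (simp add: stable_diagonalization_def unitary_def)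
  have PD: "cpx G ** P = P ** cdiag (gram_spectrum l)"
    using P by (simp add: G_def cpx_gram_self[OF d] matrix_mul_assoc[symmetric])
  have "adj N ** N ** cdiag (gram_spectrum l)
      = adj P ** (adj (cpx Li) ** cpx Li) ** (P ** cdiag (gram_spectrum l))"
    by (simp add: N_def Li_def L_def adj_mult matrix_mul_assoc)
  also have "\<dots> = adj P ** (adj (cpx Li) ** cpx Li ** cpx G) ** P"
    by (simp add: PD[symmetric] matrix_mul_assoc)
  also have "\<dots> = mat 1"
    using ZG P by simp
  finally have "adj N ** N ** cdiag (gram_spectrum l) = mat 1" .
  then have "adj N ** N ** (cdiag (gram_spectrum l) ** cdiag (inv_gram_spectrum l))
      = cdiag (inv_gram_spectrum l)"
    by (simp add: matrix_mul_assoc)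
  moreover have "cdiag (gram_spectrum l) ** cdiag (inv_gram_spectrum l) = mat 1"
    using d by (intro gram_spectrum_mult_inv) (simp add: stable_diagonalization_def)
  ultimately show ?thesis
    by simp
qed

section \<open>The kernel in canonical coordinates\<close>

definition canonical_kernel ::
  "complex^'n \<Rightarrow> complex^'n^'m \<Rightarrow> complex^'n \<Rightarrow> complex^'n^'m \<Rightarrow> real" where
  "canonical_kernel l1 U1 l2 U2 = (\<Sum>k\<in>UNIV. \<Sum>l\<in>UNIV.
      (1 - (cmod (l1 $ k))\<^sup>2) * (1 - (cmod (l2 $ l))\<^sup>2) * (cmod ((adj U1 ** U2) $ k $ l))\<^sup>2
        / (cmod (1 - cnj (l1 $ k) * l2 $ l))\<^sup>2)"

lemma frob2_eq_trace: "complex_of_real (frob2 M) = trace (cpx M ** adj (cpx M))"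
  by (simp add: trace_def frob2_def matrix_matrix_mult_def adj_def cpx_def power2_eq_square)

lemma trace_diag_congruence:
  "trace (K ** cdiag a ** adj K ** cdiag b)
     = (\<Sum>i\<in>UNIV. \<Sum>l\<in>UNIV. b $ i * a $ l * complex_of_real ((cmod (K $ i $ l))\<^sup>2))"
proof -
  have entry: "(K ** cdiag a ** adj K) $ i $ i
      = (\<Sum>l\<in>UNIV. a $ l * complex_of_real ((cmod (K $ i $ l))\<^sup>2))" for i
    unfolding cdiag_eq_diag_mat matrix_matrix_mult_def[of "K ** diag_mat a"]
    by (simp add: mult_diag_mat_entry adj_def mult.assoc mult.commute[of "K $ i $ _"] cnj_mult_self)
  have "trace (K ** cdiag a ** adj K ** cdiag b) = (\<Sum>i\<in>UNIV. b $ i * (K ** cdiag a ** adj K) $ i $ i)"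
    by (simp add: trace_def cdiag_eq_diag_mat mult_diag_mat_entry mult.commute)
  then show ?thesis
    by (simp add: entry sum_distrib_left mult.assoc)
qed

lemma kernel_canonical:
  fixes A1 A2 :: "real^'n^'n" and C1 C2 :: "real^'n^'m"
  assumes d1: "stable_diagonalization A1 C1 P1 l1 U1"
    and d2: "stable_diagonalization A2 C2 P2 l2 U2"
  shows "kernel (A1, C1) (A2, C2) = canonical_kernel l1 U1 l2 U2"
proof -
  define K where "K = cross_mat l1 U1 l2 U2"
  define Li1 where "Li1 = matrix_inv (Lfac A1 C1)"
  define Li2 where "Li2 = matrix_inv (Lfac A2 C2)"
  define N1 where "N1 = cpx Li1 ** P1"
  define N2 where "N2 = cpx Li2 ** P2"
  define M where "M = Li1 ** gram A1 C1 A2 C2 ** transpose Li2"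
  have "(\<lambda>t. transpose (Vblk A1 C1 t) ** Vblk A2 C2 t)
      = (\<lambda>t. Li1 ** (transpose (obs A1 C1 t) ** obs A2 C2 t) ** transpose Li2)"
    by (simp add: Vblk_def matrix_transpose_mul matrix_mul_assoc Li1_def Li2_def)
  then have "(\<lambda>t. transpose (Vblk A1 C1 t) ** Vblk A2 C2 t) sums M"
    unfolding M_def using sums_matrix_sandwich[OF obs_cross_sums(1)[OF d1 d2]] by simp
  then have kernel_M: "kernel (A1, C1) (A2, C2) = frob2 M"
    by (simp add: kernel_def sums_iff)
  have "cpx M = N1 ** K ** adj N2"
    by (simp add: M_def K_def N1_def N2_def cpx_mult cpx_transpose obs_cross_sums(2)[OF d1 d2]
        adj_mult matrix_mul_assoc)
  then have "cpx M ** adj (cpx M) = N1 ** (K ** (adj N2 ** N2) ** adj K ** adj N1)"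
    by (simp add: adj_mult matrix_mul_assoc)
  then have "trace (cpx M ** adj (cpx M)) = trace (K ** (adj N2 ** N2) ** adj K ** (adj N1 ** N1))"
    by (simp add: trace_mul_sym[of N1]) (simp add: matrix_mul_assoc)
  also have "\<dots> = trace (K ** cdiag (inv_gram_spectrum l2) ** adj K ** cdiag (inv_gram_spectrum l1))"
    using Lfac_inverse_whitening[OF d1] Lfac_inverse_whitening[OF d2]
    by (simp add: N1_def N2_def Li1_def Li2_def)
  also have "\<dots> = complex_of_real (canonical_kernel l1 U1 l2 U2)"
    by (simp add: trace_diag_congruence canonical_kernel_def K_def cross_mat_def inv_gram_spectrum_def
        norm_divide power_divide mult_ac)
  finally show ?thesis
    by (simp add: kernel_M flip: frob2_eq_trace)
qed

lemma quad_eq_cinner: "quad u S = cinner u (S *v u)"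
  by (simp add: quad_def cinner_def rc_cnj_complex_def)

lemma quad_add: "quad u (S + T) = quad u S + quad u T"
  by (simp add: quad_def matrix_vector_mult_def distrib_left distrib_right sum.distrib)

lemma quad_diff: "quad u (S - T) = quad u S - quad u T"
  by (simp add: quad_def matrix_vector_mult_def right_diff_distrib left_diff_distrib sum_subtractf)

lemma quad_scaleR: "quad u (c *\<^sub>R S) = complex_of_real c * quad u S"
proof -
  have "((c *\<^sub>R S) *v u) $ i = of_real c * (S *v u) $ i" for i
    unfolding matrix_vector_mult_def vec_lambda_beta vector_scaleR_component
    by (simp add: sum_distrib_left scaleR_conv_of_real mult.assoc)
  then show ?thesis
    by (simp add: quad_def sum_distrib_left mult_ac)
qed

lemma quad_zero[simp]: "quad u 0 = 0"
  by (simp add: quad_def matrix_vector_mult_def)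

lemma quad_sum: "quad u (sum f A) = (\<Sum>a\<in>A. quad u (f a))"
  by (induction A rule: infinite_finite_induct) (simp_all add: quad_add)

lemma quad_unitary_diag:
  "quad u (U ** cdiag e ** adj U)
     = (\<Sum>l\<in>UNIV. e $ l * complex_of_real ((cmod ((adj U *v u) $ l))\<^sup>2))"
proof -
  define w where "w = adj U *v u"
  have "quad u (U ** cdiag e ** adj U) = cinner u (U *v (cdiag e *v w))"
    by (simp add: quad_eq_cinner w_def matrix_vector_mul_assoc matrix_mul_assoc)
  also have "\<dots> = cinner w (cdiag e *v w)"
    by (simp add: cinner_mat_adj w_def adj_eq_mat_adj)
  also have "(cdiag e *v w) $ l = e $ l * w $ l" for l
    by (simp add: cdiag_eq_diag_mat diag_mat_def matrix_vector_mult_def if_distrib if_distribR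
        sum.If_cases)
  then have "cinner w (cdiag e *v w) = (\<Sum>l\<in>UNIV. e $ l * (cnj (w $ l) * w $ l))"
    by (simp add: cinner_def rc_cnj_complex_def mult_ac)
  finally show ?thesis
    by (simp add: w_def cnj_mult_self)
qed

lemma sum_quad_Fmat:
  "(\<Sum>k\<in>UNIV. quad (column k U1) (Fmat U2 (l1 $ k) l2))
     = complex_of_real (canonical_kernel l1 U1 l2 U2)"
proof -
  have "(adj U2 *v column k U1) $ l = cnj ((adj U1 ** U2) $ k $ l)" for k l
    by (simp add: adj_def matrix_vector_mult_def matrix_matrix_mult_def column_def mult.commute)
  moreover have "cmod (1 - l1 $ k * cnj (l2 $ l)) = cmod (1 - cnj (l1 $ k) * l2 $ l)" for k l
    by (metis complex_cnj_cnj complex_cnj_diff complex_cnj_mult complex_cnj_one complex_mod_cnj)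
  ultimately show ?thesis
    by (simp add: Fmat_def Emat_def quad_unitary_diag canonical_kernel_def mult_ac)
qed

lemma kernel_eq_sum_quad_Fmat:
  fixes A1 A2 :: "real^'n^'n" and C1 C2 :: "real^'n^'m"
  assumes "admissible sk1 A1 C1" "canonical A1 C1 l1 U1"
    and "admissible sk2 A2 C2" "canonical A2 C2 l2 U2"
  shows "complex_of_real (kernel (A1, C1) (A2, C2))
       = (\<Sum>k\<in>UNIV. quad (column k U1) (Fmat U2 (l1 $ k) l2))"
proof -
  obtain P1 where "stable_diagonalization A1 C1 P1 l1 U1"
    using admissible_canonical_stable_diagonalization[OF assms(1,2)] by metis
  moreover obtain P2 where "stable_diagonalization A2 C2 P2 l2 U2"
    using admissible_canonical_stable_diagonalization[OF assms(3,4)] by metis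
  ultimately show ?thesis
    by (simp add: kernel_canonical sum_quad_Fmat)
qed

lemma sum_weighted_difference_swap:
  fixes c :: "'i \<Rightarrow> 'a::comm_ring_1"
  shows "(\<Sum>k\<in>K. \<Sum>i\<in>I. c i * ((\<Sum>j\<in>J. d j i * q j k) - q' i k))
       = (\<Sum>i\<in>I. c i * ((\<Sum>j\<in>J. d j i * (\<Sum>k\<in>K. q j k)) - (\<Sum>k\<in>K. q' i k)))"
proof -
  have "(\<Sum>k\<in>K. \<Sum>i\<in>I. c i * ((\<Sum>j\<in>J. d j i * q j k) - q' i k))
      = (\<Sum>i\<in>I. \<Sum>k\<in>K. c i * ((\<Sum>j\<in>J. d j i * q j k) - q' i k))"
    by (rule sum.swap)
  also have "\<dots> = (\<Sum>i\<in>I. c i * ((\<Sum>k\<in>K. \<Sum>j\<in>J. d j i * q j k) - (\<Sum>k\<in>K. q' i k)))"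
    by (simp add: sum_distrib_left[symmetric] sum_subtractf)
  also have "\<dots> = (\<Sum>i\<in>I. c i * ((\<Sum>j\<in>J. d j i * (\<Sum>k\<in>K. q j k)) - (\<Sum>k\<in>K. q' i k)))"
    by (simp add: sum.swap[of _ K J] sum_distrib_left)
  finally show ?thesis .
qed

lemma Gamma_eq_sum_quad_Smat:
  fixes X D :: "nat \<Rightarrow> (real^'n^'n) \<times> (real^'n^'m)" and A :: "real^'n^'n" and C :: "real^'n^'m"
  assumes adm: "admissible sk A C" and can: "canonical A C lam U"
    and X: "\<And>i. i < N \<Longrightarrow> admissible sk (fst (X i)) (snd (X i))
                          \<and> canonical (fst (X i)) (snd (X i)) (lamX i) (UX i)"
    and D: "\<And>j. j < J \<Longrightarrow> j \<noteq> r \<Longrightarrow> admissible sk (fst (D j)) (snd (D j))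
                          \<and> canonical (fst (D j)) (snd (D j)) (lamD j) (UD j)"
  shows "complex_of_real (Gamma z X (D(r := (A, C))) N J r)
       = (\<Sum>k\<in>UNIV. quad (column k U) (Smat z lamX UX lamD UD N J r lam k))"
proof -
  let ?q = "\<lambda>U' l' k. quad (column k U) (Fmat U' (lam $ k) l')"
  have kD: "of_real (kernel (A, C) (D j)) = (\<Sum>k\<in>UNIV. ?q (UD j) (lamD j) k)"
    if "j \<in> {..<J} - {r}" for j
    using kernel_eq_sum_quad_Fmat[OF adm can, of sk "fst (D j)" "snd (D j)"] D[of j] that by simp
  have kX: "of_real (kernel (A, C) (X i)) = (\<Sum>k\<in>UNIV. ?q (UX i) (lamX i) k)"
    if "i \<in> {..<N}" for i
    using kernel_eq_sum_quad_Fmat[OF adm can, of sk "fst (X i)" "snd (X i)"] X[of i] that by simp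
  have "complex_of_real (Gamma z X (D(r := (A, C))) N J r)
      = (\<Sum>i<N. of_real (z r i) * ((\<Sum>j\<in>{..<J} - {r}. of_real (z j i)
            * (\<Sum>k\<in>UNIV. ?q (UD j) (lamD j) k)) - (\<Sum>k\<in>UNIV. ?q (UX i) (lamX i) k)))"
    unfolding Gamma_def by (auto simp: kD kX intro!: sum.cong)
  also have "\<dots> = (\<Sum>k\<in>UNIV. \<Sum>i<N. of_real (z r i) * ((\<Sum>j\<in>{..<J} - {r}. of_real (z j i)
            * ?q (UD j) (lamD j) k) - ?q (UX i) (lamX i) k))"
    by (rule sum_weighted_difference_swap[symmetric])
  also have "\<dots> = (\<Sum>k\<in>UNIV. quad (column k U) (Smat z lamX UX lamD UD N J r lam k))"
    by (simp add: Smat_def quad_sum quad_scaleR quad_diff)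
  finally show ?thesis .
qed

theorem theorem2:
  fixes sk :: bool and N J r :: nat and z :: "nat \<Rightarrow> nat \<Rightarrow> real"
    and X D :: "nat \<Rightarrow> (real^'n^'n) \<times> (real^'n^'m)"
    and lamX lamD :: "nat \<Rightarrow> complex^'n" and UX UD :: "nat \<Rightarrow> complex^'n^'m"
  assumes "r < J"
    and "\<forall>i<N. admissible sk (fst (X i)) (snd (X i))"
    and "\<forall>j<J. j \<noteq> r \<longrightarrow> admissible sk (fst (D j)) (snd (D j))"
    and "\<forall>i<N. canonical (fst (X i)) (snd (X i)) (lamX i) (UX i)"
    and "\<forall>j<J. j \<noteq> r \<longrightarrow> canonical (fst (D j)) (snd (D j)) (lamD j) (UD j)"
  shows "\<forall>(A::real^'n^'n) (C::real^'n^'m). admissible sk A C \<longrightarrow>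
           (\<exists>lam U. canonical A C lam U) \<and>
           (\<forall>lam U. canonical A C lam U \<longrightarrow>
              adj U ** U = mat 1 \<and> (\<forall>k. cmod (lam $ k) < 1) \<and>
              complex_of_real (Gamma z X (D(r := (A, C))) N J r)
                = (\<Sum>k\<in>UNIV. quad (column k U) (Smat z lamX UX lamD UD N J r lam k)))"
proof (intro allI impI conjI)
  fix A :: "real^'n^'n" and C :: "real^'n^'m" and lam U
  assume adm: "admissible sk A C"
  then show "\<exists>lam U. canonical A C lam U"
    by (rule admissible_has_canonical)
  assume can: "canonical A C lam U"
  show "adj U ** U = mat 1"
    using adm can by (intro canonical_measurement_unitary) (simp_all add: admissible_def)
  show "cmod (lam $ k) < 1" for k
    using adm can by (intro canonical_eigenvalue_in_disc) (simp_all add: admissible_def)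
  show "complex_of_real (Gamma z X (D(r := (A, C))) N J r)
      = (\<Sum>k\<in>UNIV. quad (column k U) (Smat z lamX UX lamD UD N J r lam k))"
    using assms(2-5) by (intro Gamma_eq_sum_quad_Smat[OF adm can]) auto
qed

end
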